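(* Let $(X,G)$ be a minimal system with finite minimal rank $mr$. Then $cr=\#\pi_{max}^{-1}(x)$ for every fiber distal point $x\in X_{max}$. Moreover, $X_{max}^{distal}=\{x\in X_{max}:\#\pi_{max}^{-1}(x)=cr\}$, and $cr=mr$ whenever $X_{max}$ contains a fiber distal point.
   Context: Let $X$ be a compact metric space with metric $d$ and $G$ a locally compact abelian group acting continuously and minimally on $X$, written $t\cdot x$. Points $x,y$ are proximal if $\inf_{t\in G}d(t\cdot x,t\cdot y)=0$. Let $\pi_{max}:X\to X_{max}$ be the maximal equicontinuous factor. For $x\in X_{max}$, $\delta>0$, $cr(x,\delta)$ is the maximal cardinality $l$ of a set $\{x_1,\dots,x_l\}\subset\pi_{max}^{-1}(x)$ with $\inf_{t\in G}d(t\cdot x_i,t\cdot x_j)\ge\delta$ for $i\neq j$; the coincidence rank is $cr=\lim_{\delta\to0^+}cr(x,\delta)$ (independent of $x$). The minimal rank is $mr=\inf\{\#\pi_{max}^{-1}(x):x\in X_{max}\}$. A point $x\in X$ is distal if it is not proximal to any $y\neq x$; a point $x\in X_{max}$ is fiber distal if every point of $\pi_{max}^{-1}(x)$ is distal; $X_{max}^{distal}$ denotes the set of fiber distal points. *)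

theory Defs
  imports "HOL-Analysis.Analysis" "HOL-Library.Extended_Real"
begin

definition is_action_on :: "('g::ab_group_add \<Rightarrow> 'a \<Rightarrow> 'a) \<Rightarrow> 'a set \<Rightarrow> bool" where
  "is_action_on act S \<longleftrightarrow>
     (\<forall>t. \<forall>x\<in>S. act t x \<in> S) \<and>
     (\<forall>x\<in>S. act 0 x = x) \<and>
     (\<forall>s t. \<forall>x\<in>S. act (s + t) x = act s (act t x))"

definition continuous_action_on ::
    "('g::topological_space \<Rightarrow> 'a::topological_space \<Rightarrow> 'a) \<Rightarrow> 'a set \<Rightarrow> bool" where
  "continuous_action_on act S \<longleftrightarrow> continuous_on (UNIV \<times> S) (\<lambda>p. act (fst p) (snd p))"

definition equicontinuous_on :: "('g \<Rightarrow> 'a::metric_space \<Rightarrow> 'a) \<Rightarrow> 'a set \<Rightarrow> bool" where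
  "equicontinuous_on act S \<longleftrightarrow>
     (\<forall>e>0. \<exists>d>0. \<forall>t. \<forall>x\<in>S. \<forall>y\<in>S. dist x y < d \<longrightarrow> dist (act t x) (act t y) < e)"

definition minimal_action :: "('g \<Rightarrow> 'a::topological_space \<Rightarrow> 'a) \<Rightarrow> bool" where
  "minimal_action act \<longleftrightarrow> (\<forall>x. closure (range (\<lambda>t. act t x)) = UNIV)"

text \<open>Since every compact metric space embeds into the Hilbert cube,
  factors Z are represented as compact subsets of the countable product nat => real
  (product topology, metrizable).\<close>
definition max_equicontinuous_factor ::
    "('g::{topological_ab_group_add} \<Rightarrow> 'x::metric_space \<Rightarrow> 'x)
     \<Rightarrow> ('g \<Rightarrow> 'y::metric_space \<Rightarrow> 'y) \<Rightarrow> ('x \<Rightarrow> 'y) \<Rightarrow> bool" where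
  "max_equicontinuous_factor actX actY \<pi> \<longleftrightarrow>
     compact (UNIV :: 'y set) \<and>
     is_action_on actY UNIV \<and> continuous_action_on actY UNIV \<and>
     equicontinuous_on actY UNIV \<and>
     continuous_on UNIV \<pi> \<and> surj \<pi> \<and> (\<forall>t x. \<pi> (actX t x) = actY t (\<pi> x)) \<and>
     (\<forall>(Z :: (nat \<Rightarrow> real) set) actZ p.
        (compact Z \<and> Z \<noteq> {} \<and> is_action_on actZ Z \<and> continuous_action_on actZ Z \<and>
         equicontinuous_on actZ Z \<and>
         continuous_on UNIV p \<and> p ` UNIV = Z \<and> (\<forall>t x. p (actX t x) = actZ t (p x)))
        \<longrightarrow> (\<exists>\<psi>. continuous_on UNIV \<psi> \<and> \<psi> ` UNIV \<subseteq> Z \<and>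
                 (\<forall>t y. \<psi> (actY t y) = actZ t (\<psi> y)) \<and> (\<forall>x. p x = \<psi> (\<pi> x))))"

definition ecard :: "'a set \<Rightarrow> enat" where
  "ecard A = (if finite A then enat (card A) else \<infinity>)"

definition proximal :: "('g \<Rightarrow> 'x::metric_space \<Rightarrow> 'x) \<Rightarrow> 'x \<Rightarrow> 'x \<Rightarrow> bool" where
  "proximal act x y \<longleftrightarrow> (INF t. dist (act t x) (act t y)) = 0"

definition distal_point :: "('g \<Rightarrow> 'x::metric_space \<Rightarrow> 'x) \<Rightarrow> 'x \<Rightarrow> bool" where
  "distal_point act x \<longleftrightarrow> (\<forall>y. y \<noteq> x \<longrightarrow> \<not> proximal act x y)"

definition fiber_distal :: "('g \<Rightarrow> 'x::metric_space \<Rightarrow> 'x) \<Rightarrow> ('x \<Rightarrow> 'y) \<Rightarrow> 'y \<Rightarrow> bool" where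
  "fiber_distal act \<pi> y \<longleftrightarrow> (\<forall>x \<in> \<pi> -` {y}. distal_point act x)"

definition cr_delta :: "('g \<Rightarrow> 'x::metric_space \<Rightarrow> 'x) \<Rightarrow> ('x \<Rightarrow> 'y) \<Rightarrow> 'y \<Rightarrow> real \<Rightarrow> enat" where
  "cr_delta act \<pi> y \<delta> = Sup {enat (card S) | S. finite S \<and> S \<subseteq> \<pi> -` {y} \<and>
       (\<forall>a\<in>S. \<forall>b\<in>S. a \<noteq> b \<longrightarrow> (INF t. dist (act t a) (act t b)) \<ge> \<delta>)}"

definition coincidence_rank :: "('g \<Rightarrow> 'x::metric_space \<Rightarrow> 'x) \<Rightarrow> ('x \<Rightarrow> 'y) \<Rightarrow> 'y \<Rightarrow> enat" where
  "coincidence_rank act \<pi> y = Lim (at_right (0::real)) (cr_delta act \<pi> y)"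

definition minimal_rank :: "('x \<Rightarrow> 'y) \<Rightarrow> enat" where
  "minimal_rank \<pi> = (INF y. ecard (\<pi> -` {y}))"

end

theory Submission
  imports Defs
begin

text \<open>
  Call the infimum over the orbit of the distance of two points their
  orbit gap, and call a set \<open>\<delta>\<close>-separated if distinct points have orbit gap at least \<open>\<delta>\<close>.
  (1) A finite \<open>\<delta>\<close>-separated subset of a fiber can be pushed along the orbit to any fiber
      in the orbit closure: limits of its translates (along a common convergent
      subsequence, by compactness) stay \<open>\<delta>\<close>-separated and distinct.  By minimality every
      orbit of the factor is dense, so \<open>cr(y,\<delta>)\<close> does not depend on \<open>y\<close>; being antitone
      in \<open>\<delta>\<close>, its limit at \<open>0+\<close> is a supremum, so \<open>cr\<close> is bounded by every fiber size,
      hence by \<open>mr\<close>.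
  (2) Over a fiber distal point every finite part of the fiber is separated for some
      \<open>\<delta> > 0\<close>, hence \<open>cr\<close> equals the fiber size there.
  (3) Proximal points lie in a common fiber of an equicontinuous factor; so if a finite
      fiber has exactly \<open>cr\<close> points, it is itself \<open>\<delta>\<close>-separated for some \<open>\<delta>\<close> and thus
      contains no proximal pair: the point is fiber distal.
\<close>

lemma Lim_at_right_antitone_enat:
  fixes f :: "real \<Rightarrow> enat"
  assumes antitone: "\<And>d d'. 0 < d \<Longrightarrow> d \<le> d' \<Longrightarrow> f d' \<le> f d"
  shows "Lim (at_right 0) f = (SUP d\<in>{0<..}. f d)"
proof (rule tendsto_Lim[OF trivial_limit_at_right_real])
  show "(f \<longlongrightarrow> (SUP d\<in>{0<..}. f d)) (at_right 0)"
    unfolding order_tendsto_iff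
  proof (intro conjI allI impI)
    fix l assume "l < (SUP d\<in>{0<..}. f d)"
    then obtain d0 where d0: "d0 > 0" "l < f d0" by (auto simp: less_SUP_iff)
    show "\<forall>\<^sub>F x in at_right 0. l < f x"
      unfolding eventually_at_right_field
      using d0 antitone by (intro exI[of _ d0]) (auto intro: less_le_trans)
  next
    fix u assume u: "(SUP d\<in>{0<..}. f d) < u"
    show "\<forall>\<^sub>F x in at_right 0. f x < u"
      using eventually_at_right_less[of "0::real"]
    proof (rule eventually_mono)
      fix x :: real assume "0 < x"
      then have "f x \<le> (SUP d\<in>{0<..}. f d)" by (intro SUP_upper) auto
      then show "f x < u" using u by simp
    qed
  qed
qed

lemma common_convergent_subseq:
  fixes u :: "'i \<Rightarrow> nat \<Rightarrow> 'x::metric_space"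
  assumes compact: "compact (UNIV::'x set)" and fin: "finite I"
  shows "\<exists>r L. strict_mono r \<and> (\<forall>i\<in>I. (u i \<circ> r) \<longlonglongrightarrow> L i)"
  using fin
proof (induction I rule: finite_induct)
  case empty
  then show ?case by (intro exI[of _ id]) (auto simp: strict_mono_def)
next
  case (insert i I)
  then obtain r L where r: "strict_mono r" "\<forall>j\<in>I. (u j \<circ> r) \<longlonglongrightarrow> L j" by blast
  from compact_imp_seq_compact[OF compact] obtain l r2 where
    r2: "strict_mono r2" "((u i \<circ> r) \<circ> r2) \<longlonglongrightarrow> l"
    unfolding seq_compact_def by blast
  show ?case
  proof (intro exI[of _ "r \<circ> r2"] exI[of _ "L(i := l)"] conjI ballI)
    show "strict_mono (r \<circ> r2)" by (rule strict_mono_o[OF r(1) r2(1)])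
  next
    fix j assume j: "j \<in> insert i I"
    show "(u j \<circ> (r \<circ> r2)) \<longlonglongrightarrow> (L(i := l)) j"
    proof (cases "j = i")
      case True
      then show ?thesis using r2 by (simp add: o_assoc)
    next
      case False
      with j r(2) have "((u j \<circ> r) \<circ> r2) \<longlonglongrightarrow> L j"
        by (intro LIMSEQ_subseq_LIMSEQ[OF _ r2(1)]) auto
      then show ?thesis using False by (simp add: o_assoc)
    qed
  qed
qed

subsection \<open>Orbit gaps and separated sets\<close>

definition orbit_gap :: "('g \<Rightarrow> 'x::metric_space \<Rightarrow> 'x) \<Rightarrow> 'x \<Rightarrow> 'x \<Rightarrow> real" where
  "orbit_gap act a b = (INF t. dist (act t a) (act t b))"

definition orbit_separated :: "('g \<Rightarrow> 'x::metric_space \<Rightarrow> 'x) \<Rightarrow> real \<Rightarrow> 'x set \<Rightarrow> bool" where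
  "orbit_separated act \<delta> S \<longleftrightarrow> (\<forall>a\<in>S. \<forall>b\<in>S. a \<noteq> b \<longrightarrow> \<delta> \<le> orbit_gap act a b)"

lemma orbit_gap_le: "orbit_gap act a b \<le> dist (act t a) (act t b)"
  unfolding orbit_gap_def by (rule cINF_lower) (auto intro: bdd_belowI[where m=0])

lemma orbit_gap_nonneg: "0 \<le> orbit_gap act a b"
  unfolding orbit_gap_def by (rule cINF_greatest) auto

lemma orbit_gap_less_iff: "orbit_gap act a b < e \<longleftrightarrow> (\<exists>t. dist (act t a) (act t b) < e)"
  unfolding orbit_gap_def by (subst cINF_less_iff) (auto intro: bdd_belowI[where m=0])

lemma proximal_iff_orbit_gap: "proximal act a b \<longleftrightarrow> orbit_gap act a b = 0"
  unfolding proximal_def orbit_gap_def ..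

lemma orbit_separated_antitone:
  "orbit_separated act \<delta>' S \<Longrightarrow> \<delta> \<le> \<delta>' \<Longrightarrow> orbit_separated act \<delta> S"
  unfolding orbit_separated_def by force

definition separated_cards ::
    "('g \<Rightarrow> 'x::metric_space \<Rightarrow> 'x) \<Rightarrow> ('x \<Rightarrow> 'y) \<Rightarrow> 'y \<Rightarrow> real \<Rightarrow> enat set" where
  "separated_cards act \<pi> y \<delta> =
     {enat (card S) | S. finite S \<and> S \<subseteq> \<pi> -` {y} \<and> orbit_separated act \<delta> S}"

lemma cr_delta_separated_cards: "cr_delta act \<pi> y \<delta> = Sup (separated_cards act \<pi> y \<delta>)"
  unfolding cr_delta_def separated_cards_def orbit_separated_def orbit_gap_def by simp

lemma separated_cardsI:
  "finite S \<Longrightarrow> S \<subseteq> \<pi> -` {y} \<Longrightarrow> orbit_separated act \<delta> S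
     \<Longrightarrow> enat (card S) \<le> cr_delta act \<pi> y \<delta>"
  unfolding cr_delta_separated_cards separated_cards_def by (rule Sup_upper) auto

lemma cr_delta_le_ecard: "cr_delta act \<pi> y \<delta> \<le> ecard (\<pi> -` {y})"
  unfolding cr_delta_separated_cards separated_cards_def
  by (rule Sup_least) (auto simp: ecard_def intro: card_mono)

lemma cr_delta_antitone: "\<delta> \<le> \<delta>' \<Longrightarrow> cr_delta act \<pi> y \<delta>' \<le> cr_delta act \<pi> y \<delta>"
  unfolding cr_delta_separated_cards separated_cards_def
  by (rule Sup_subset_mono) (blast intro: orbit_separated_antitone)

lemma coincidence_rank_SUP:
  "coincidence_rank act \<pi> y = (SUP \<delta>\<in>{0<..}. cr_delta act \<pi> y \<delta>)"
  unfolding coincidence_rank_def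
  by (rule Lim_at_right_antitone_enat) (rule cr_delta_antitone)

lemma coincidence_rank_le_ecard: "coincidence_rank act \<pi> y \<le> ecard (\<pi> -` {y})"
  unfolding coincidence_rank_SUP by (rule SUP_least) (rule cr_delta_le_ecard)

subsection \<open>Transporting separated sets between fibers\<close>

text \<open>If every point of a \<open>\<delta>\<close>-separated set \<open>S\<close> (\<open>\<delta> > 0\<close>) is moved along a common sequence
  of group elements and converges, the limit map is injective on \<open>S\<close> and its image is
  again \<open>\<delta>\<close>-separated: the gap only increases under translation and passes to limits.\<close>
lemma orbit_separated_limit:
  fixes act :: "'g::ab_group_add \<Rightarrow> 'x::metric_space \<Rightarrow> 'x"
  assumes action: "is_action_on act UNIV"
    and cont: "\<And>s. continuous_on UNIV (act s)"
    and sep: "orbit_separated act \<delta> S" and \<delta>: "0 < \<delta>"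
    and lim: "\<And>a. a \<in> S \<Longrightarrow> (\<lambda>n. act (t n) a) \<longlonglongrightarrow> L a"
  shows "inj_on L S" and "orbit_separated act \<delta> (L ` S)"
proof -
  have gap_limit: "\<delta> \<le> dist (act s (L a)) (act s (L b))"
    if ab: "a \<in> S" "b \<in> S" "a \<noteq> b" for a b s
  proof -
    have "isCont (act s) x" for x
      using cont by (simp add: continuous_on_eq_continuous_at)
    then have "(\<lambda>n. dist (act s (act (t n) a)) (act s (act (t n) b)))
              \<longlonglongrightarrow> dist (act s (L a)) (act s (L b))"
      by (intro tendsto_dist isCont_tendsto_compose[of _ "act s"] lim ab)
    moreover have "\<delta> \<le> dist (act s (act (t n) a)) (act s (act (t n) b))" for n
    proof -
      have "\<delta> \<le> orbit_gap act a b" using sep ab unfolding orbit_separated_def by auto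
      also have "\<dots> \<le> dist (act (s + t n) a) (act (s + t n) b)" by (rule orbit_gap_le)
      finally show ?thesis using action by (simp add: is_action_on_def)
    qed
    ultimately show ?thesis by (intro LIMSEQ_le_const) auto
  qed
  show "inj_on L S"
  proof (rule inj_onI, rule ccontr)
    fix a b assume ab: "a \<in> S" "b \<in> S" "L a = L b" "a \<noteq> b"
    then have "\<delta> \<le> dist (act 0 (L a)) (act 0 (L b))" using gap_limit by blast
    then show False using ab \<delta> by simp
  qed
  show "orbit_separated act \<delta> (L ` S)"
    unfolding orbit_separated_def
  proof (intro ballI impI)
    fix a' b' assume "a' \<in> L ` S" "b' \<in> L ` S" "a' \<noteq> b'"
    then obtain a b where "a \<in> S" "b \<in> S" "a \<noteq> b" "a' = L a" "b' = L b" by auto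
    then show "\<delta> \<le> orbit_gap act a' b'"
      unfolding orbit_gap_def using gap_limit by (intro cINF_greatest) auto
  qed
qed

lemma orbit_separated_transfer:
  fixes actX :: "'g::ab_group_add \<Rightarrow> 'x::metric_space \<Rightarrow> 'x"
    and actY :: "'g \<Rightarrow> 'y::metric_space \<Rightarrow> 'y"
  assumes compact: "compact (UNIV :: 'x set)"
    and action: "is_action_on actX UNIV"
    and cont: "\<And>s. continuous_on UNIV (actX s)"
    and \<pi>_cont: "continuous_on UNIV \<pi>"
    and equivariant: "\<And>t x. \<pi> (actX t x) = actY t (\<pi> x)"
    and y': "y' \<in> closure (range (\<lambda>t. actY t y))"
    and \<delta>: "0 < \<delta>" and S: "finite S" "S \<subseteq> \<pi> -` {y}" "orbit_separated actX \<delta> S"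
  shows "\<exists>S'. finite S' \<and> S' \<subseteq> \<pi> -` {y'} \<and> orbit_separated actX \<delta> S' \<and> card S' = card S"
proof -
  obtain z where z: "\<forall>n. z n \<in> range (\<lambda>t. actY t y)" "z \<longlonglongrightarrow> y'"
    using y' unfolding closure_sequential by blast
  then have "\<forall>n. \<exists>t. z n = actY t y" by auto
  then obtain tt where "\<And>n. z n = actY (tt n) y" by metis
  then have "z = (\<lambda>n. actY (tt n) y)" by auto
  with z(2) have tt: "(\<lambda>n. actY (tt n) y) \<longlonglongrightarrow> y'" by simp
  obtain r L where r: "strict_mono r" "\<forall>a\<in>S. ((\<lambda>n. actX (tt n) a) \<circ> r) \<longlonglongrightarrow> L a"
    using common_convergent_subseq[OF compact S(1), of "\<lambda>a n. actX (tt n) a"] by blast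
  have lim: "(\<lambda>n. actX (tt (r n)) a) \<longlonglongrightarrow> L a" if "a \<in> S" for a
    using r(2) that by (simp add: o_def)
  have in_fiber: "\<pi> (L a) = y'" if a: "a \<in> S" for a
  proof (rule LIMSEQ_unique)
    show "(\<lambda>n. \<pi> (actX (tt (r n)) a)) \<longlonglongrightarrow> \<pi> (L a)"
      using \<pi>_cont lim[OF a] by (intro isCont_tendsto_compose[of _ \<pi>])
        (auto simp: continuous_on_eq_continuous_at)
    have "(\<lambda>n. actY (tt (r n)) y) \<longlonglongrightarrow> y'"
      using LIMSEQ_subseq_LIMSEQ[OF tt r(1)] by (simp add: o_def)
    then show "(\<lambda>n. \<pi> (actX (tt (r n)) a)) \<longlonglongrightarrow> y'"
      using a S(2) by (auto simp: equivariant)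
  qed
  have inj: "inj_on L S" and sep: "orbit_separated actX \<delta> (L ` S)"
    using orbit_separated_limit[OF action cont S(3) \<delta> lim] by blast+
  show ?thesis
  proof (intro exI[of _ "L ` S"] conjI sep)
    show "finite (L ` S)" using S(1) by simp
    show "L ` S \<subseteq> \<pi> -` {y'}" using in_fiber by auto
    show "card (L ` S) = card S" using inj by (rule card_image)
  qed
qed

lemma factor_orbit_dense:
  fixes actX :: "'g \<Rightarrow> 'x::metric_space \<Rightarrow> 'x"
    and actY :: "'g \<Rightarrow> 'y::metric_space \<Rightarrow> 'y"
  assumes minimal: "minimal_action actX"
    and \<pi>_cont: "continuous_on UNIV \<pi>" and \<pi>_surj: "surj \<pi>"
    and equivariant: "\<And>t x. \<pi> (actX t x) = actY t (\<pi> x)"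
  shows "y' \<in> closure (range (\<lambda>t. actY t y))"
proof -
  obtain x where x: "\<pi> x = y" using \<pi>_surj by (metis surjD)
  have "\<pi> ` closure (range (\<lambda>t. actX t x)) \<subseteq> closure (range (\<lambda>t. actY t y))"
  proof (rule image_closure_subset)
    show "continuous_on (closure (range (\<lambda>t. actX t x))) \<pi>"
      using \<pi>_cont by (rule continuous_on_subset) auto
    show "\<pi> ` range (\<lambda>t. actX t x) \<subseteq> closure (range (\<lambda>t. actY t y))"
      using closure_subset equivariant x by fastforce
  qed auto
  then show ?thesis
    using minimal \<pi>_surj unfolding minimal_action_def by (metis UNIV_I subsetD)
qed

lemma coincidence_rank_independent:
  fixes actX :: "'g::ab_group_add \<Rightarrow> 'x::metric_space \<Rightarrow> 'x"
    and actY :: "'g \<Rightarrow> 'y::metric_space \<Rightarrow> 'y"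
  assumes compact: "compact (UNIV :: 'x set)"
    and action: "is_action_on actX UNIV"
    and cont: "\<And>s. continuous_on UNIV (actX s)"
    and minimal: "minimal_action actX"
    and \<pi>_cont: "continuous_on UNIV \<pi>" and \<pi>_surj: "surj \<pi>"
    and equivariant: "\<And>t x. \<pi> (actX t x) = actY t (\<pi> x)"
  shows "coincidence_rank actX \<pi> y = coincidence_rank actX \<pi> y'"
proof -
  have cards_mono: "separated_cards actX \<pi> y \<delta> \<subseteq> separated_cards actX \<pi> y' \<delta>"
    if \<delta>: "0 < \<delta>" for y y' \<delta>
  proof
    fix c assume "c \<in> separated_cards actX \<pi> y \<delta>"
    then obtain S where S: "c = enat (card S)" "finite S" "S \<subseteq> \<pi> -` {y}"
      "orbit_separated actX \<delta> S" unfolding separated_cards_def by blast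
    have "y' \<in> closure (range (\<lambda>t. actY t y))"
      using minimal \<pi>_cont \<pi>_surj equivariant by (rule factor_orbit_dense)
    from orbit_separated_transfer[OF compact action cont \<pi>_cont equivariant this \<delta> S(2-4)]
    obtain S' where "finite S'" "S' \<subseteq> \<pi> -` {y'}" "orbit_separated actX \<delta> S'" "card S' = card S"
      by blast
    then show "c \<in> separated_cards actX \<pi> y' \<delta>"
      unfolding separated_cards_def S(1) by (metis (mono_tags, lifting) mem_Collect_eq)
  qed
  have "cr_delta actX \<pi> y \<delta> = cr_delta actX \<pi> y' \<delta>" if "0 < \<delta>" for \<delta>
    using cards_mono[OF that, of y y'] cards_mono[OF that, of y' y]
    by (simp add: cr_delta_separated_cards)
  then show ?thesis unfolding coincidence_rank_SUP by (intro SUP_cong refl) simp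
qed

subsection \<open>Fiber distal points\<close>

text \<open>A finite set of pairwise non-proximal points is \<open>\<delta>\<close>-separated for some \<open>\<delta> > 0\<close>,
  namely the least orbit gap of its pairs.\<close>
lemma finite_non_proximal_separated:
  assumes fin: "finite S"
    and non_prox: "\<And>a b. a \<in> S \<Longrightarrow> b \<in> S \<Longrightarrow> a \<noteq> b \<Longrightarrow> \<not> proximal act a b"
  shows "\<exists>\<delta>>0. orbit_separated act \<delta> S"
proof -
  define P where "P = {(a, b). a \<in> S \<and> b \<in> S \<and> a \<noteq> b}"
  define \<delta> where "\<delta> = (if P = {} then 1 else Min ((\<lambda>(a, b). orbit_gap act a b) ` P))"
  have finP: "finite P" using fin unfolding P_def by (auto intro: finite_subset[of _ "S \<times> S"])
  have gap_pos: "0 < orbit_gap act a b" if "(a, b) \<in> P" for a b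
  proof -
    have "orbit_gap act a b \<noteq> 0"
      using non_prox[of a b] that unfolding P_def proximal_iff_orbit_gap by auto
    then show ?thesis using orbit_gap_nonneg[of act a b] by linarith
  qed
  have "0 < \<delta>" unfolding \<delta>_def using finP gap_pos by (auto simp: Min_gr_iff)
  moreover have "orbit_separated act \<delta> S"
    unfolding orbit_separated_def
  proof (intro ballI impI)
    fix a b assume "a \<in> S" "b \<in> S" "a \<noteq> b"
    then have "(a, b) \<in> P" unfolding P_def by auto
    then have "orbit_gap act a b \<in> (\<lambda>(a, b). orbit_gap act a b) ` P"
      by (rule rev_image_eqI) simp
    then show "\<delta> \<le> orbit_gap act a b" unfolding \<delta>_def using finP by auto
  qed
  ultimately show ?thesis by blast
qed

lemma coincidence_rank_fiber_distal:
  assumes fd: "fiber_distal act \<pi> y"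
  shows "coincidence_rank act \<pi> y = ecard (\<pi> -` {y})"
proof (rule antisym[OF coincidence_rank_le_ecard])
  have lower: "enat (card S) \<le> coincidence_rank act \<pi> y"
    if S: "finite S" "S \<subseteq> \<pi> -` {y}" for S
  proof -
    have non_prox: "\<not> proximal act a b" if "a \<in> S" "b \<in> S" "a \<noteq> b" for a b
      using fd S that unfolding fiber_distal_def distal_point_def by auto
    obtain \<delta> where \<delta>: "0 < \<delta>" "orbit_separated act \<delta> S"
      using finite_non_proximal_separated[OF S(1) non_prox] by blast
    have "enat (card S) \<le> cr_delta act \<pi> y \<delta>" by (rule separated_cardsI[OF S \<delta>(2)])
    also have "\<dots> \<le> coincidence_rank act \<pi> y"
      unfolding coincidence_rank_SUP using \<delta>(1) by (intro SUP_upper) auto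
    finally show ?thesis .
  qed
  show "ecard (\<pi> -` {y}) \<le> coincidence_rank act \<pi> y"
  proof (cases "finite (\<pi> -` {y})")
    case True
    then show ?thesis using lower[OF True] by (simp add: ecard_def)
  next
    case False
    have arbitrarily_large: "enat n \<le> coincidence_rank act \<pi> y" for n
    proof -
      obtain B where "finite B" "card B = n" "B \<subseteq> \<pi> -` {y}"
        using infinite_arbitrarily_large[OF False] by blast
      then show ?thesis using lower by blast
    qed
    have "coincidence_rank act \<pi> y = \<infinity>"
    proof (cases "coincidence_rank act \<pi> y")
      case (enat m)
      then show ?thesis using arbitrarily_large[of "Suc m"] by simp
    qed simp
    then show ?thesis by simp
  qed
qed

text \<open>Proximal points have the same image in an equicontinuous factor: the factor map is
  uniformly continuous, and equicontinuity lets one undo the translation that brought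
  the images close.\<close>
lemma proximal_same_fiber:
  fixes actX :: "'g::ab_group_add \<Rightarrow> 'x::metric_space \<Rightarrow> 'x"
    and actY :: "'g \<Rightarrow> 'y::metric_space \<Rightarrow> 'y"
  assumes compact: "compact (UNIV :: 'x set)"
    and actionY: "is_action_on actY UNIV" and equicont: "equicontinuous_on actY UNIV"
    and \<pi>_cont: "continuous_on UNIV \<pi>"
    and equivariant: "\<And>t x. \<pi> (actX t x) = actY t (\<pi> x)"
    and prox: "proximal actX a b"
  shows "\<pi> a = \<pi> b"
proof (rule ccontr)
  assume "\<pi> a \<noteq> \<pi> b"
  then have e: "0 < dist (\<pi> a) (\<pi> b)" by simp
  obtain d where d: "0 < d"
    "\<forall>t. \<forall>u\<in>UNIV. \<forall>v\<in>UNIV. dist u v < d \<longrightarrow> dist (actY t u) (actY t v) < dist (\<pi> a) (\<pi> b)"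
    using equicont e unfolding equicontinuous_on_def by blast
  have "uniformly_continuous_on UNIV \<pi>" by (rule compact_uniformly_continuous[OF \<pi>_cont compact])
  then obtain d' where d': "0 < d'" "\<forall>x\<in>UNIV. \<forall>x'\<in>UNIV. dist x' x < d' \<longrightarrow> dist (\<pi> x') (\<pi> x) < d"
    using d(1) unfolding uniformly_continuous_on_def by blast
  obtain t where "dist (actX t a) (actX t b) < d'"
    using prox d'(1) orbit_gap_less_iff[of actX a b d'] by (auto simp: proximal_iff_orbit_gap)
  then have "dist (actY t (\<pi> a)) (actY t (\<pi> b)) < d" using d'(2) by (simp flip: equivariant)
  then have "dist (actY (-t) (actY t (\<pi> a))) (actY (-t) (actY t (\<pi> b))) < dist (\<pi> a) (\<pi> b)"
    using d(2) by blast
  moreover have "actY (-t) (actY t u) = u" for u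
    using actionY unfolding is_action_on_def by (metis UNIV_I add.left_inverse)
  ultimately show False by simp
qed

text \<open>Conversely, over an equicontinuous factor a finite fiber with exactly
  \<open>cr\<close> points is fiber distal: it is itself \<open>\<delta>\<close>-separated for some \<open>\<delta> > 0\<close>, while any
  point proximal to a point of the fiber lies in the same fiber.\<close>
lemma fiber_distal_if_card_eq_coincidence_rank:
  fixes actX :: "'g::ab_group_add \<Rightarrow> 'x::metric_space \<Rightarrow> 'x"
    and actY :: "'g \<Rightarrow> 'y::metric_space \<Rightarrow> 'y"
  assumes compact: "compact (UNIV :: 'x set)"
    and actionY: "is_action_on actY UNIV" and equicont: "equicontinuous_on actY UNIV"
    and \<pi>_cont: "continuous_on UNIV \<pi>"
    and equivariant: "\<And>t x. \<pi> (actX t x) = actY t (\<pi> x)"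
    and fin: "finite (\<pi> -` {y})"
    and card_eq: "coincidence_rank actX \<pi> y = enat (card (\<pi> -` {y}))"
  shows "fiber_distal actX \<pi> y"
  unfolding fiber_distal_def distal_point_def
proof (intro ballI allI impI notI)
  fix x z assume x: "x \<in> \<pi> -` {y}" and zx: "z \<noteq> x" and prox: "proximal actX x z"
  have z: "z \<in> \<pi> -` {y}"
    using proximal_same_fiber[OF compact actionY equicont \<pi>_cont equivariant prox] x by simp
  define n where "n = card (\<pi> -` {y})"
  have "0 < n" unfolding n_def using fin x by (auto simp: card_gt_0_iff)
  then have "enat (n - 1) < coincidence_rank actX \<pi> y" using card_eq n_def by simp
  then obtain \<delta> where \<delta>: "0 < \<delta>" "enat (n - 1) < cr_delta actX \<pi> y \<delta>"
    unfolding coincidence_rank_SUP by (auto simp: less_SUP_iff)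
  then obtain S where S: "finite S" "S \<subseteq> \<pi> -` {y}" "orbit_separated actX \<delta> S" "n - 1 < card S"
    unfolding cr_delta_separated_cards separated_cards_def by (auto simp: less_Sup_iff)
  have "card S \<le> n" unfolding n_def using card_mono[OF fin S(2)] .
  then have "S = \<pi> -` {y}" using S(4) card_subset_eq[OF fin S(2)] unfolding n_def by simp
  then have "\<delta> \<le> orbit_gap actX x z" using S(3) x z zx unfolding orbit_separated_def by auto
  then show False using prox \<delta>(1) by (simp add: proximal_iff_orbit_gap)
qed

subsection \<open>Minimal systems over an equicontinuous factor\<close>

lemma continuous_action_on_slice:
  assumes "continuous_action_on act UNIV"
  shows "continuous_on UNIV (act s)"
proof -
  have "continuous_on UNIV (\<lambda>x. (\<lambda>p. act (fst p) (snd p)) (s, x))"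
    using assms unfolding continuous_action_on_def
    by (rule continuous_on_compose2) (auto intro: continuous_intros)
  then show ?thesis by simp
qed

locale minimal_over_equicontinuous_factor =
  fixes actX :: "'g::ab_group_add \<Rightarrow> 'x::metric_space \<Rightarrow> 'x"
    and actY :: "'g \<Rightarrow> 'y::metric_space \<Rightarrow> 'y"
    and \<pi> :: "'x \<Rightarrow> 'y"
  assumes compact: "compact (UNIV :: 'x set)"
    and action: "is_action_on actX UNIV"
    and cont: "\<And>s. continuous_on UNIV (actX s)"
    and minimal: "minimal_action actX"
    and actionY: "is_action_on actY UNIV"
    and equicont: "equicontinuous_on actY UNIV"
    and \<pi>_cont: "continuous_on UNIV \<pi>"
    and \<pi>_surj: "surj \<pi>"
    and equivariant: "\<And>t x. \<pi> (actX t x) = actY t (\<pi> x)"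
begin

lemma coincidence_rank_const: "coincidence_rank actX \<pi> y = coincidence_rank actX \<pi> y'"
  using compact action cont minimal \<pi>_cont \<pi>_surj equivariant
  by (rule coincidence_rank_independent)

lemma coincidence_rank_le_minimal_rank: "coincidence_rank actX \<pi> y \<le> minimal_rank \<pi>"
  unfolding minimal_rank_def
proof (rule INF_greatest)
  fix y' show "coincidence_rank actX \<pi> y \<le> ecard (\<pi> -` {y'})"
    using coincidence_rank_le_ecard[of actX \<pi> y'] coincidence_rank_const[of y y'] by simp
qed

lemma fiber_distal_iff_card_eq_coincidence_rank:
  assumes mr_finite: "minimal_rank \<pi> < \<infinity>"
  shows "fiber_distal actX \<pi> y \<longleftrightarrow> ecard (\<pi> -` {y}) = coincidence_rank actX \<pi> y'"
proof
  assume "fiber_distal actX \<pi> y"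
  then show "ecard (\<pi> -` {y}) = coincidence_rank actX \<pi> y'"
    using coincidence_rank_fiber_distal coincidence_rank_const[of y y'] by metis
next
  assume eq: "ecard (\<pi> -` {y}) = coincidence_rank actX \<pi> y'"
  have "coincidence_rank actX \<pi> y' < \<infinity>"
    using coincidence_rank_le_minimal_rank mr_finite by (rule le_less_trans)
  then have fin: "finite (\<pi> -` {y})" using eq by (auto simp: ecard_def split: if_splits)
  then have "coincidence_rank actX \<pi> y = enat (card (\<pi> -` {y}))"
    using eq coincidence_rank_const[of y y'] by (simp add: ecard_def)
  then show "fiber_distal actX \<pi> y"
    by (rule fiber_distal_if_card_eq_coincidence_rank[where actX = actX and actY = actY,
          OF compact actionY equicont \<pi>_cont equivariant fin])
qed

end

theorem mainTheorem2:
  fixes actX :: "'g::{topological_ab_group_add, t2_space} \<Rightarrow> 'x::metric_space \<Rightarrow> 'x"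
    and actY :: "'g \<Rightarrow> 'y::metric_space \<Rightarrow> 'y"
    and \<pi> :: "'x \<Rightarrow> 'y"
  assumes G_lc: "locally_compact_space (euclidean :: 'g topology)"
    and X_compact: "compact (UNIV :: 'x set)"
    and act: "is_action_on actX UNIV"
    and act_cont: "continuous_action_on actX UNIV"
    and minimal: "minimal_action actX"
    and maxfac: "max_equicontinuous_factor actX actY \<pi>"
    and mr_finite: "minimal_rank \<pi> < \<infinity>"
  shows "(\<forall>y y'. fiber_distal actX \<pi> y \<longrightarrow> coincidence_rank actX \<pi> y' = ecard (\<pi> -` {y}))
       \<and> (\<forall>y'. {y. fiber_distal actX \<pi> y} = {y. ecard (\<pi> -` {y}) = coincidence_rank actX \<pi> y'})
       \<and> (\<forall>y'. (\<exists>y. fiber_distal actX \<pi> y) \<longrightarrow> coincidence_rank actX \<pi> y' = minimal_rank \<pi>)"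
proof -
  interpret minimal_over_equicontinuous_factor actX actY \<pi>
    using X_compact act continuous_action_on_slice[OF act_cont] minimal maxfac
    by unfold_locales (auto simp: max_equicontinuous_factor_def)
  note distal_iff = fiber_distal_iff_card_eq_coincidence_rank[OF mr_finite]
  have mr_le: "minimal_rank \<pi> \<le> ecard (\<pi> -` {y})" for y
    unfolding minimal_rank_def by (rule INF_lower) simp
  show ?thesis
  proof (intro conjI allI impI)
    fix y y' assume "fiber_distal actX \<pi> y"
    then show "coincidence_rank actX \<pi> y' = ecard (\<pi> -` {y})" using distal_iff by metis
  next
    fix y'
    show "{y. fiber_distal actX \<pi> y} = {y. ecard (\<pi> -` {y}) = coincidence_rank actX \<pi> y'}"
      using distal_iff by blast
  next
    fix y' assume "\<exists>y. fiber_distal actX \<pi> y"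
    then obtain y where "ecard (\<pi> -` {y}) = coincidence_rank actX \<pi> y'" using distal_iff by blast
    then show "coincidence_rank actX \<pi> y' = minimal_rank \<pi>"
      using coincidence_rank_le_minimal_rank[of y'] mr_le[of y] by (simp add: antisym)
  qed
qed

end
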